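(* Let $G_r=(V_r,E_r)$ (virtual network) and $G_s=(V_s,E_s)$ (substrate network) be simple, connected, undirected graphs, with integer demands $d_{\bar u}$ ($\bar u\in V_r$), $d_{\bar e}$ ($\bar e\in E_r$) and integer capacities $c_u$ ($u\in V_s$), $c_e$ ($e\in E_s$). Let $(x,y)$ be the incidence vector of a feasible mapping of $G_r$ on $G_s$. Then for every virtual edge $\bar e=(\bar u,\bar v)\in E_r$ and every arc $(u,v)\in E'_s$, the flow continuity inequality $$y_{\bar e (u,v)}\le \sum_{e'\in\delta^+(v)\setminus\{(v,u)\}} y_{\bar e e'} + x_{\bar v v}$$ holds.
   Context: A mapping $m=(m_V,m_E)$ of $G_r$ on $G_s$ consists of a node placement $m_V:V_r\to V_s$ which is one-to-one (distinct virtual nodes are placed on distinct substrate nodes), and an edge routing $m_E$ assigning to each virtual edge $\bar e=\{\bar u,\bar v\}\in E_r$ a loop-free path of $G_s$ whose endpoints are $m_V(\bar u)$ and $m_V(\bar v)$. The mapping is feasible if for each $u\in V_s$ the sum of $d_{\bar u}$ over virtual nodes $\bar u$ with $m_V(\bar u)=u$ is at most $c_u$, and for each $e\in E_s$ the sum of $d_{\bar e}$ over virtual edges $\bar e$ whose routing path contains $e$ is at most $c_e$. Each virtual edge is given a fixed arbitrary orientation, written $\bar e=(\bar u,\bar v)$. Let $E'_s=\bigcup_{\{u,v\}\in E_s}\{(u,v),(v,u)\}$ be the arc set of the bidirected substrate network, and for $u\in V_s$ let $\delta^+(u)$ (resp. $\delta^-(u)$) be the set of arcs of $E'_s$ leaving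 (resp. entering) $u$. The incidence vector $(x,y)$ of a mapping $m$ has binary components $x_{\bar u u}$ ($\bar u\in V_r$, $u\in V_s$), equal to $1$ iff $m_V(\bar u)=u$, and $y_{\bar e a}$ ($\bar e\in E_r$, $a\in E'_s$), where for $\bar e=(\bar u,\bar v)$ and $a=(u,v)$, $y_{\bar e (u,v)}=1$ iff the path $m_E(\bar e)$, traversed from $m_V(\bar u)$ to $m_V(\bar v)$, uses the edge $\{u,v\}$ in the direction from $u$ to $v$. *)

theory Defs
  imports Main
begin

definition simple_graph :: "'a set \<Rightarrow> 'a set set \<Rightarrow> bool" where
  "simple_graph V E \<longleftrightarrow> finite V \<and> (\<forall>e\<in>E. e \<subseteq> V \<and> card e = 2)"

definition connected_graph :: "'a set \<Rightarrow> 'a set set \<Rightarrow> bool" where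
  "connected_graph V E \<longleftrightarrow>
     (\<forall>u\<in>V. \<forall>v\<in>V. (u, v) \<in> {(a, b). {a, b} \<in> E}\<^sup>*)"

(* Virtual edges carry a fixed orientation: E_r is given as a set of ordered pairs
   (u,v), each undirected edge {u,v} appearing with exactly one orientation. *)
definition oriented :: "('b \<times> 'b) set \<Rightarrow> bool" where
  "oriented Er \<longleftrightarrow> (\<forall>(u, v)\<in>Er. u \<noteq> v \<and> (v, u) \<notin> Er)"

definition undirected :: "('b \<times> 'b) set \<Rightarrow> 'b set set" where
  "undirected Er = {{u, v} | u v. (u, v) \<in> Er}"

definition arcs :: "'a set set \<Rightarrow> ('a \<times> 'a) set" where
  "arcs Es = {(u, v). {u, v} \<in> Es}"

definition out_arcs :: "'a set set \<Rightarrow> 'a \<Rightarrow> ('a \<times> 'a) set" where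
  "out_arcs Es u = {a \<in> arcs Es. fst a = u}"

definition in_arcs :: "'a set set \<Rightarrow> 'a \<Rightarrow> ('a \<times> 'a) set" where
  "in_arcs Es u = {a \<in> arcs Es. snd a = u}"

definition loopfree_path :: "'a set set \<Rightarrow> 'a list \<Rightarrow> 'a \<Rightarrow> 'a \<Rightarrow> bool" where
  "loopfree_path Es p s t \<longleftrightarrow> p \<noteq> [] \<and> hd p = s \<and> last p = t \<and> distinct p \<and>
     (\<forall>i. Suc i < length p \<longrightarrow> {p ! i, p ! Suc i} \<in> Es)"

definition path_arcs :: "'a list \<Rightarrow> ('a \<times> 'a) set" where
  "path_arcs p = set (zip p (tl p))"

definition path_edges :: "'a list \<Rightarrow> 'a set set" where
  "path_edges p = {{u, v} | u v. (u, v) \<in> path_arcs p}"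

definition is_mapping ::
  "'b set \<Rightarrow> ('b \<times> 'b) set \<Rightarrow> 'a set \<Rightarrow> 'a set set \<Rightarrow>
   ('b \<Rightarrow> 'a) \<Rightarrow> ('b \<times> 'b \<Rightarrow> 'a list) \<Rightarrow> bool" where
  "is_mapping Vr Er Vs Es mV mE \<longleftrightarrow>
     inj_on mV Vr \<and> mV ` Vr \<subseteq> Vs \<and>
     (\<forall>(u, v)\<in>Er. loopfree_path Es (mE (u, v)) (mV u) (mV v))"

definition feasible_mapping ::
  "'b set \<Rightarrow> ('b \<times> 'b) set \<Rightarrow> 'a set \<Rightarrow> 'a set set \<Rightarrow>
   ('b \<Rightarrow> int) \<Rightarrow> ('b \<times> 'b \<Rightarrow> int) \<Rightarrow> ('a \<Rightarrow> int) \<Rightarrow> ('a set \<Rightarrow> int) \<Rightarrow>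
   ('b \<Rightarrow> 'a) \<Rightarrow> ('b \<times> 'b \<Rightarrow> 'a list) \<Rightarrow> bool" where
  "feasible_mapping Vr Er Vs Es dV dE cV cE mV mE \<longleftrightarrow>
     is_mapping Vr Er Vs Es mV mE \<and>
     (\<forall>u\<in>Vs. (\<Sum>ub\<in>{ub \<in> Vr. mV ub = u}. dV ub) \<le> cV u) \<and>
     (\<forall>e\<in>Es. (\<Sum>eb\<in>{eb \<in> Er. e \<in> path_edges (mE eb)}. dE eb) \<le> cE e)"

definition inc_x :: "('b \<Rightarrow> 'a) \<Rightarrow> 'b \<Rightarrow> 'a \<Rightarrow> int" where
  "inc_x mV ub u = (if mV ub = u then 1 else 0)"

definition inc_y :: "('b \<times> 'b \<Rightarrow> 'a list) \<Rightarrow> 'b \<times> 'b \<Rightarrow> 'a \<times> 'a \<Rightarrow> int" where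
  "inc_y mE eb a = (if a \<in> path_arcs (mE eb) then 1 else 0)"

end

theory Submission
  imports Defs
begin

text \<open>If the routing path of a virtual edge enters \<open>v\<close> through the arc \<open>(u, v)\<close>, then either
  \<open>v\<close> is the last node of the path, which is the host of the head of the virtual edge, or the
  path leaves \<open>v\<close> again through an arc of \<open>\<delta>\<^sup>+(v)\<close>; since the path is loop-free, that arc
  is not \<open>(v, u)\<close>.\<close>

lemma finite_arcs:
  assumes "simple_graph V E" shows "finite (arcs E)"
proof -
  have "arcs E \<subseteq> V \<times> V" using assms unfolding simple_graph_def arcs_def by auto
  moreover have "finite V" using assms unfolding simple_graph_def by auto
  ultimately show ?thesis by (meson finite_SigmaI finite_subset)
qed

lemma in_path_arcs_iff:
  "(u, v) \<in> path_arcs p \<longleftrightarrow> (\<exists>i. Suc i < length p \<and> p ! i = u \<and> p ! Suc i = v)"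
proof
  assume "(u, v) \<in> path_arcs p"
  then obtain i where "i < length p - 1" "zip p (tl p) ! i = (u, v)"
    unfolding path_arcs_def in_set_conv_nth by auto
  then show "\<exists>i. Suc i < length p \<and> p ! i = u \<and> p ! Suc i = v"
    by (auto simp: nth_tl intro!: exI[of _ i])
next
  assume "\<exists>i. Suc i < length p \<and> p ! i = u \<and> p ! Suc i = v"
  then obtain i where "Suc i < length p" "p ! i = u" "p ! Suc i = v" by blast
  then show "(u, v) \<in> path_arcs p"
    unfolding path_arcs_def in_set_conv_nth by (auto simp: nth_tl intro!: exI[of _ i])
qed

lemma loopfree_path_arcs_subset:
  assumes "loopfree_path E p s t" shows "path_arcs p \<subseteq> arcs E"
  using assms unfolding loopfree_path_def arcs_def by (auto simp: in_path_arcs_iff)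

lemma loopfree_path_leaves_node:
  assumes "loopfree_path E p s t" and "(u, v) \<in> path_arcs p" and "v \<noteq> t"
  obtains w where "(v, w) \<in> path_arcs p" and "w \<noteq> u"
proof -
  obtain i where i: "Suc i < length p" "p ! i = u" "p ! Suc i = v"
    using assms(2) by (auto simp: in_path_arcs_iff)
  have "Suc (Suc i) < length p"
  proof (rule ccontr)
    assume "\<not> Suc (Suc i) < length p"
    then have "Suc i = length p - 1" using i(1) by simp
    moreover have "p \<noteq> []" using i(1) by auto
    ultimately have "v = last p" using i(3) by (simp add: last_conv_nth)
    with assms(1,3) show False unfolding loopfree_path_def by simp
  qed
  moreover have "p ! Suc (Suc i) \<noteq> u"
  proof -
    have "distinct p" using assms(1) unfolding loopfree_path_def by simp
    with \<open>Suc (Suc i) < length p\<close> show ?thesis unfolding i(2)[symmetric]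
      by (simp add: nth_eq_iff_index_eq)
  qed
  ultimately show ?thesis using i(3) that by (auto simp: in_path_arcs_iff)
qed

lemma inc_y_le_sum:
  assumes "finite A" and "a \<in> A" shows "inc_y mE eb a \<le> (\<Sum>a'\<in>A. inc_y mE eb a')"
  using assms by (intro member_le_sum) (auto simp: inc_y_def)

lemma sum_inc_y_nonneg: "0 \<le> (\<Sum>a\<in>A. inc_y mE eb a)"
  by (rule sum_nonneg) (simp add: inc_y_def)

theorem proposition2:
  fixes Vr :: "'b set" and Er :: "('b \<times> 'b) set"
    and Vs :: "'a set" and Es :: "'a set set"
    and dV :: "'b \<Rightarrow> int" and dE :: "'b \<times> 'b \<Rightarrow> int"
    and cV :: "'a \<Rightarrow> int" and cE :: "'a set \<Rightarrow> int"
    and mV :: "'b \<Rightarrow> 'a" and mE :: "'b \<times> 'b \<Rightarrow> 'a list"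
  assumes "simple_graph Vr (undirected Er)" and "oriented Er"
    and "connected_graph Vr (undirected Er)"
    and "simple_graph Vs Es" and "connected_graph Vs Es"
    and "feasible_mapping Vr Er Vs Es dV dE cV cE mV mE"
    and "(ub, vb) \<in> Er" and "(u, v) \<in> arcs Es"
  shows "inc_y mE (ub, vb) (u, v)
           \<le> (\<Sum>a\<in>out_arcs Es v - {(v, u)}. inc_y mE (ub, vb) a) + inc_x mV vb v"
proof -
  let ?p = "mE (ub, vb)" and ?out = "out_arcs Es v - {(v, u)}"
  have path: "loopfree_path Es ?p (mV ub) (mV vb)"
    using assms(6,7) unfolding feasible_mapping_def is_mapping_def by auto
  have fin: "finite ?out" using finite_arcs[OF assms(4)] unfolding out_arcs_def by auto
  have y_out_nonneg: "0 \<le> (\<Sum>a\<in>?out. inc_y mE (ub, vb) a)"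
    by (rule sum_inc_y_nonneg)
  consider (unused) "(u, v) \<notin> path_arcs ?p" | (ends) "v = mV vb"
    | (leaves) w where "(v, w) \<in> path_arcs ?p" "w \<noteq> u"
    using loopfree_path_leaves_node[OF path] by blast
  then show ?thesis
  proof cases
    case unused
    then show ?thesis using y_out_nonneg by (simp add: inc_y_def inc_x_def)
  next
    case ends
    then show ?thesis using y_out_nonneg by (simp add: inc_y_def inc_x_def)
  next
    case leaves
    then have "(v, w) \<in> ?out"
      using loopfree_path_arcs_subset[OF path] unfolding out_arcs_def by auto
    with leaves show ?thesis using inc_y_le_sum[OF fin, of "(v, w)" mE "(ub, vb)"]
      by (simp add: inc_y_def inc_x_def)
  qed
qed

end
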